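(* Let $S$ be an inverse semigroup that is a mirror semigroup, with semilattice of idempotents $\Sigma$. Then $S$ is stably continuous if and only if $\Sigma$ is stably continuous.
   Context: An inverse semigroup is a semigroup $S$ in which every $s$ has a unique $s^*$ with $ss^*s=s$ and $s^*ss^*=s^*$. $\Sigma=\Sigma(S)$ is the set of idempotents (itself an inverse semigroup, a semilattice). The intrinsic order is $s\leqslant t$ iff $s=t\epsilon$ for some idempotent $\epsilon$. A subset is directed if nonempty and any two elements have an upper bound in it. $S$ is a mirror semigroup if every directed subset of $\Sigma$ having a supremum in $(\Sigma,\leqslant)$ also has a supremum in $(S,\leqslant)$. In a poset, $x$ is way-below $y$ ($x\ll y$) if for every directed subset $D$ that has a supremum with $y\leqslant \sup D$, there is $d\in D$ with $x\leqslant d$. A poset is continuous if for every $s$ the set $\{t : t\ll s\}$ is directed with supremum $s$. An inverse semigroup $T$ is stably continuous if $(T,\leqslant)$ is continuous and its way-below relation $\ll$ is multiplicative, i.e. $s\ll t$ and $s'\ll t'$ imply $ss'\ll tt'$. For $\Sigma$ these notions are taken with respect to the poset $(\Sigma,\leqslant)$ and its own way-below relation. *)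

theory Defs
  imports Main
begin

definition inverse_semigroup :: "'a::semigroup_mult itself \<Rightarrow> bool" where
  "inverse_semigroup _ \<longleftrightarrow>
     (\<forall>s::'a. \<exists>!t::'a. s * t * s = s \<and> t * s * t = t)"

definition idems :: "'a::semigroup_mult set" where
  "idems = {e. e * e = e}"

definition ileq :: "'a::semigroup_mult \<Rightarrow> 'a \<Rightarrow> bool" where
  "ileq s t \<longleftrightarrow> (\<exists>e\<in>idems. s = t * e)"

definition directed_in :: "('a \<Rightarrow> 'a \<Rightarrow> bool) \<Rightarrow> 'a set \<Rightarrow> 'a set \<Rightarrow> bool" where
  "directed_in le A D \<longleftrightarrow> D \<subseteq> A \<and> D \<noteq> {} \<and>
     (\<forall>x\<in>D. \<forall>y\<in>D. \<exists>z\<in>D. le x z \<and> le y z)"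

definition is_sup_in :: "('a \<Rightarrow> 'a \<Rightarrow> bool) \<Rightarrow> 'a set \<Rightarrow> 'a set \<Rightarrow> 'a \<Rightarrow> bool" where
  "is_sup_in le A D x \<longleftrightarrow> x \<in> A \<and> (\<forall>d\<in>D. le d x) \<and>
     (\<forall>u\<in>A. (\<forall>d\<in>D. le d u) \<longrightarrow> le x u)"

definition way_below_in :: "('a \<Rightarrow> 'a \<Rightarrow> bool) \<Rightarrow> 'a set \<Rightarrow> 'a \<Rightarrow> 'a \<Rightarrow> bool" where
  "way_below_in le A x y \<longleftrightarrow>
     (\<forall>D s. directed_in le A D \<and> is_sup_in le A D s \<and> le y s \<longrightarrow> (\<exists>d\<in>D. le x d))"

definition continuous_in :: "('a \<Rightarrow> 'a \<Rightarrow> bool) \<Rightarrow> 'a set \<Rightarrow> bool" where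
  "continuous_in le A \<longleftrightarrow>
     (\<forall>s\<in>A. directed_in le A {t\<in>A. way_below_in le A t s} \<and>
             is_sup_in le A {t\<in>A. way_below_in le A t s} s)"

text \<open>Stably continuous: continuous with multiplicative way-below relation,
  with respect to the subposet A (A = UNIV for S, A = idems for Sigma).\<close>
definition stably_continuous_in :: "'a::semigroup_mult set \<Rightarrow> bool" where
  "stably_continuous_in A \<longleftrightarrow> continuous_in ileq A \<and>
     (\<forall>s\<in>A. \<forall>t\<in>A. \<forall>s'\<in>A. \<forall>t'\<in>A.
        way_below_in ileq A s t \<and> way_below_in ileq A s' t' \<longrightarrow>
        way_below_in ileq A (s * s') (t * t'))"

definition mirror_semigroup :: "'a::semigroup_mult itself \<Rightarrow> bool" where
  "mirror_semigroup _ \<longleftrightarrow>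
     (\<forall>D::'a set. directed_in ileq idems D \<and> (\<exists>x. is_sup_in ileq idems D x) \<longrightarrow>
        (\<exists>y. is_sup_in ileq UNIV D y))"

end

theory Submission
  imports Defs
begin

text \<open>Write src s = ginv s * s and tgt s = s * ginv s. In the natural order t \<le> s iff
  t = s src t, and by the mirror property s is the supremum in S of s E whenever E is a
  directed set of idempotents with supremum src s. If the idempotents form a continuous poset,
  taking E to be the idempotents way below src s shows: t \<ll> s in S iff t \<le> s and
  src t \<ll> src s among the idempotents (and dually with tgt). So the approximants of s are
  s times the approximants of src s, way-below between idempotents is the same in S and in the
  idempotents, and multiplicativity transfers along src and tgt via src (src s s') = src (s s')
  and tgt (src s s') = src s tgt s'.\<close>

section \<open>Way-below in arbitrary posets\<close>

lemma way_below_in_imp_le: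
  assumes "way_below_in le A x y" "y \<in> A" "le y y"
  shows "le x y"
proof -
  have "directed_in le A {y}" "is_sup_in le A {y} y"
    using assms(2,3) unfolding directed_in_def is_sup_in_def by auto
  then show ?thesis using assms(1,3) unfolding way_below_in_def by blast
qed

lemma way_below_in_le_trans:
  assumes "transp le" "le x x'" "way_below_in le A x' y"
  shows "way_below_in le A x y"
  using assms unfolding way_below_in_def transp_def by blast

lemma directed_in_image:
  assumes "directed_in le A D" "f ` D \<subseteq> B"
    and "\<And>a b. a \<in> D \<Longrightarrow> b \<in> D \<Longrightarrow> le a b \<Longrightarrow> le (f a) (f b)"
  shows "directed_in le B (f ` D)"
  using assms unfolding directed_in_def by (simp add: image_iff) metis

lemma way_below_in_involution:
  assumes inv: "\<And>x. f (f x) = x" and mono: "\<And>x y. le (f x) (f y) \<longleftrightarrow> le x y"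
    and wb: "way_below_in le UNIV x y"
  shows "way_below_in le UNIV (f x) (f y)"
  unfolding way_below_in_def
proof (intro allI impI, elim conjE)
  have swap: "le (f a) b \<longleftrightarrow> le a (f b)" for a b
    using mono[of a "f b"] inv[of b] by simp
  fix D s assume D: "directed_in le UNIV D" and s: "is_sup_in le UNIV D s" and "le (f y) s"
  have "directed_in le UNIV (f ` D)"
    using directed_in_image[OF D] mono by blast
  moreover have "is_sup_in le UNIV (f ` D) (f s)"
    unfolding is_sup_in_def
  proof (intro conjI ballI impI)
    fix u assume "\<forall>d'\<in>f ` D. le d' u"
    then have "\<forall>d\<in>D. le d (f u)" using swap by blast
    then have "le s (f u)" using s unfolding is_sup_in_def by blast
    then show "le (f s) u" using swap by blast
  qed (use s mono in \<open>auto simp: is_sup_in_def\<close>)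
  moreover have "le y (f s)" using \<open>le (f y) s\<close> swap by blast
  ultimately obtain d where "d \<in> D" "le x (f d)"
    using wb unfolding way_below_in_def by blast
  then show "\<exists>d\<in>D. le (f x) d" using swap by blast
qed

section \<open>Algebra of inverse semigroups\<close>

definition ginv :: "'a::semigroup_mult \<Rightarrow> 'a" where
  "ginv s = (THE t. s * t * s = s \<and> t * s * t = t)"

abbreviation src :: "'a::semigroup_mult \<Rightarrow> 'a" where
  "src s \<equiv> ginv s * s"

abbreviation tgt :: "'a::semigroup_mult \<Rightarrow> 'a" where
  "tgt s \<equiv> s * ginv s"

lemma mem_idems_iff [simp]: "e \<in> idems \<longleftrightarrow> e * e = e"
  by (simp add: idems_def)

lemma idem_absorb:
  fixes e z :: "'a::semigroup_mult" assumes "e * e = e" shows "e * (e * z) = e * z"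
  using assms by (metis mult.assoc)

context
  assumes inverse_semigroup: "inverse_semigroup TYPE('a::semigroup_mult)"
begin

lemma ginv_inverse: fixes s :: 'a shows "s * ginv s * s = s" "ginv s * s * ginv s = ginv s"
proof -
  have "\<exists>!t::'a. s * t * s = s \<and> t * s * t = t"
    using inverse_semigroup unfolding inverse_semigroup_def by blast
  from theI'[OF this] show "s * ginv s * s = s" "ginv s * s * ginv s = ginv s"
    unfolding ginv_def by auto
qed

lemma ginv_inverse_assoc: fixes s z :: 'a
  shows "s * (ginv s * s) = s" "ginv s * (s * ginv s) = ginv s"
    "s * (ginv s * (s * z)) = s * z" "ginv s * (s * (ginv s * z)) = ginv s * z"
  using ginv_inverse[of s] by (metis mult.assoc)+

lemma ginv_eqI: fixes s t :: 'a assumes "s * t * s = s" "t * s * t = t" shows "ginv s = t"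
proof -
  have "\<exists>!t::'a. s * t * s = s \<and> t * s * t = t"
    using inverse_semigroup unfolding inverse_semigroup_def by blast
  then show ?thesis using assms ginv_inverse[of s] by blast
qed

lemma ginv_idem: fixes e :: 'a assumes "e * e = e" shows "ginv e = e"
  using ginv_eqI[of e e] assms by (simp add: mult.assoc)

lemma ginv_ginv [simp]: fixes s :: 'a shows "ginv (ginv s) = s"
  using ginv_eqI[of "ginv s" s] ginv_inverse[of s] by (simp add: mult.assoc)

lemma src_idem: fixes s :: 'a shows "src s * src s = src s"
  using ginv_inverse[of s] by (metis mult.assoc)

lemma tgt_idem: fixes s :: 'a shows "tgt s * tgt s = tgt s"
  using ginv_inverse[of s] by (metis mult.assoc)

text \<open>For idempotents a, b the element y = b (ginv (a b)) a is an idempotent inverse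
  of a b; as an idempotent is its own unique inverse, a b = ginv y = y.\<close>

lemma idem_mult_idem: fixes a b :: 'a assumes a: "a * a = a" and b: "b * b = b"
  shows "(a * b) * (a * b) = a * b"
proof -
  define x where "x = ginv (a * b)"
  have x1: "a * b * x * (a * b) = a * b" and x2: "x * (a * b) * x = x"
    using ginv_inverse[of "a * b"] x_def by auto
  define y where "y = b * x * a"
  have "\<And>z. x * (a * (b * (x * z))) = x * z" using x2 by (metis mult.assoc)
  then have y: "y * y = y" unfolding y_def by (simp add: mult.assoc)
  have "(a * b) * y * (a * b) = a * b" "y * (a * b) * y = y"
    unfolding y_def using x1 x2 a b by (metis mult.assoc)+
  then have "ginv y = a * b" by (intro ginv_eqI) (simp_all add: mult.assoc)
  then show ?thesis using ginv_idem[OF y] y by simp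
qed

lemma idem_commute: fixes e f :: 'a assumes e: "e * e = e" and f: "f * f = f"
  shows "e * f = f * e"
proof -
  have ef: "(e * f) * (e * f) = e * f" and "(f * e) * (f * e) = f * e"
    using idem_mult_idem e f by auto
  then have "ginv (e * f) = f * e"
    using e f by (intro ginv_eqI) (metis mult.assoc)+
  then show ?thesis using ginv_idem[OF ef] by simp
qed

lemma idem_left_commute: fixes e f z :: 'a assumes "e * e = e" "f * f = f"
  shows "e * (f * z) = f * (e * z)"
  using idem_commute[OF assms] by (metis mult.assoc)

lemma ginv_mult: fixes s t :: 'a shows "ginv (s * t) = ginv t * ginv s"
proof (rule ginv_eqI)
  have c: "tgt t * src s = src s * tgt t"
    using idem_commute src_idem tgt_idem by blast
  have "s * t * (ginv t * ginv s) * (s * t) = s * (tgt t * src s) * t"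
    by (simp add: mult.assoc)
  also have "\<dots> = s * (src s * tgt t) * t" using c by simp
  also have "\<dots> = (s * ginv s * s) * (t * ginv t * t)" by (simp add: mult.assoc)
  finally show "s * t * (ginv t * ginv s) * (s * t) = s * t" using ginv_inverse by simp
  have "ginv t * ginv s * (s * t) * (ginv t * ginv s) = ginv t * (src s * tgt t) * ginv s"
    by (simp add: mult.assoc)
  also have "\<dots> = ginv t * (tgt t * src s) * ginv s" using c by simp
  also have "\<dots> = (ginv t * t * ginv t) * (ginv s * s * ginv s)" by (simp add: mult.assoc)
  finally show "ginv t * ginv s * (s * t) * (ginv t * ginv s) = ginv t * ginv s"
    using ginv_inverse by simp
qed

lemma src_mult_idem: fixes s e :: 'a assumes "e * e = e" shows "src (s * e) = src s * e"
proof -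
  have "src (s * e) = e * (src s * e)" by (simp add: ginv_mult ginv_idem assms mult.assoc)
  also have "\<dots> = src s * e"
    using idem_left_commute[OF assms src_idem[of s]] assms by (simp add: mult.assoc)
  finally show ?thesis .
qed

lemma tgt_idem_mult: fixes s e :: 'a assumes "e * e = e" shows "tgt (e * s) = e * tgt s"
proof -
  have "tgt (e * s) = e * (tgt s * e)" by (simp add: ginv_mult ginv_idem assms mult.assoc)
  also have "\<dots> = e * tgt s"
    using idem_commute[OF assms tgt_idem[of s]] assms by (metis mult.assoc)
  finally show ?thesis .
qed

lemma src_src_mult: fixes s t :: 'a shows "src (src s * t) = src (s * t)"
  by (simp add: ginv_mult ginv_idem src_idem mult.assoc ginv_inverse_assoc)

lemma conjugate_idem: fixes e t :: 'a assumes "e * e = e"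
  shows "(ginv t * e * t) * (ginv t * e * t) = ginv t * e * t"
proof -
  have "(ginv t * e * t) * (ginv t * e * t) = ginv t * (e * (tgt t * (e * t)))"
    by (simp add: mult.assoc)
  also have "\<dots> = ginv t * tgt t * (e * (e * t))"
    using idem_left_commute[OF assms tgt_idem[of t]] by (simp add: mult.assoc)
  also have "\<dots> = ginv t * e * t"
    using assms by (simp add: mult.assoc ginv_inverse_assoc idem_absorb)
  finally show ?thesis .
qed

section \<open>The natural partial order\<close>

lemma ileqI_right: fixes s t e :: 'a assumes "e * e = e" "s = t * e" shows "ileq s t"
  using assms unfolding ileq_def by auto

lemma ileqI_left: fixes s t e :: 'a assumes e: "e * e = e" and s: "s = e * t" shows "ileq s t"
proof (rule ileqI_right[OF conjugate_idem[OF e, of t]])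
  have "t * (ginv t * e * t) = (tgt t * e) * t" by (simp add: mult.assoc)
  also have "\<dots> = (e * tgt t) * t" using idem_commute[OF tgt_idem[of t] e] by simp
  also have "\<dots> = s" using s by (simp add: mult.assoc ginv_inverse_assoc)
  finally show "s = t * (ginv t * e * t)" by simp
qed

lemma ileq_iff_src: fixes s t :: 'a shows "ileq s t \<longleftrightarrow> s = t * src s"
proof
  assume "ileq s t"
  then obtain e where e: "e * e = e" "s = t * e" unfolding ileq_def by auto
  have "t * src s = t * (src t * e)" using e by (simp add: src_mult_idem)
  also have "\<dots> = s" using e by (simp add: mult.assoc ginv_inverse_assoc)
  finally show "s = t * src s" by simp
qed (use ileqI_right src_idem in blast)

lemma ileq_iff_tgt: fixes s t :: 'a shows "ileq s t \<longleftrightarrow> s = tgt s * t"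
proof
  assume "ileq s t"
  then obtain e where e: "e * e = e" "s = t * e" unfolding ileq_def by auto
  have "tgt s * t = t * (e * src t)"
    using e by (simp add: ginv_mult ginv_idem mult.assoc) (metis e(1) mult.assoc)
  also have "\<dots> = t * src t * e"
    using idem_commute[OF e(1) src_idem[of t]] by (simp add: mult.assoc)
  also have "\<dots> = s" using e by (simp add: ginv_inverse_assoc)
  finally show "s = tgt s * t" by simp
qed (use ileqI_left tgt_idem in blast)

lemma ileq_refl: fixes s :: 'a shows "ileq s s"
  using ileq_iff_src ginv_inverse by (simp add: mult.assoc)

lemma ileq_trans: fixes s t u :: 'a assumes "ileq s t" "ileq t u" shows "ileq s u"
proof -
  obtain e where e: "e * e = e" "s = t * e" using assms(1) unfolding ileq_def by auto
  obtain f where f: "f * f = f" "t = u * f" using assms(2) unfolding ileq_def by auto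
  show ?thesis
    using ileqI_right[OF idem_mult_idem[OF f(1) e(1)]] e f by (simp add: mult.assoc)
qed

lemma transp_ileq: "transp (ileq :: 'a \<Rightarrow> 'a \<Rightarrow> bool)"
  using ileq_trans by (blast intro: transpI)

lemma ileq_antisym: fixes s t :: 'a assumes "ileq s t" "ileq t s" shows "s = t"
proof -
  obtain e where e: "e * e = e" "s = t * e" using assms(1) unfolding ileq_def by auto
  obtain f where f: "f * f = f" "t = s * f" using assms(2) unfolding ileq_def by auto
  have "t = t * (f * e)" using e f idem_commute[OF e(1) f(1)] by (metis mult.assoc)
  then have "t * e = t" using e(1) by (metis mult.assoc)
  then show ?thesis using e by simp
qed

lemma ileq_idem_imp_idem: fixes s e :: 'a assumes "ileq s e" "e * e = e" shows "s * s = s"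
proof -
  obtain f where f: "f * f = f" "s = e * f" using assms(1) unfolding ileq_def by auto
  show ?thesis using idem_mult_idem[OF assms(2) f(1)] f by simp
qed

lemma ileq_idems_iff: fixes e f :: 'a assumes "e * e = e" "f * f = f"
  shows "ileq e f \<longleftrightarrow> e = f * e"
  using assms ileq_iff_src ginv_idem by (metis ileqI_right)

lemma ileq_ginv_iff [simp]: fixes s t :: 'a shows "ileq (ginv s) (ginv t) \<longleftrightarrow> ileq s t"
proof -
  have "ileq (ginv s) (ginv t)" if "ileq s t" for s t :: 'a
  proof -
    have "s = tgt s * t" using that ileq_iff_tgt by blast
    then have "ginv s = ginv t * tgt s" by (metis ginv_mult ginv_ginv mult.assoc)
    then show ?thesis using ileqI_right tgt_idem by blast
  qed
  then show ?thesis using ginv_ginv by metis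
qed

lemma ileq_mult: fixes s t s' t' :: 'a assumes "ileq s t" "ileq s' t'"
  shows "ileq (s * s') (t * t')"
proof -
  have "ileq (tgt s * (t * t' * src s')) (t * t' * src s')"
    by (rule ileqI_left[OF tgt_idem]) simp
  moreover have "ileq (t * t' * src s') (t * t')" by (rule ileqI_right[OF src_idem]) simp
  moreover have "s * s' = tgt s * (t * t' * src s')"
    using assms ileq_iff_src ileq_iff_tgt by (metis mult.assoc)
  ultimately show ?thesis using ileq_trans by simp
qed

lemma ileq_src: fixes s t :: 'a assumes "ileq s t" shows "ileq (src s) (src t)"
  using ileq_mult assms ileq_ginv_iff by blast

lemma ileq_mult_idem_right: fixes s e :: 'a assumes "e * e = e" shows "ileq (s * e) s"
  using ileqI_right[OF assms] by simp

lemma ileq_mult_idem_left: fixes s e :: 'a assumes "e * e = e" shows "ileq (e * s) s"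
  using ileqI_left[OF assms] by simp

lemma way_below_imp_ileq: fixes x y :: 'a
  assumes "way_below_in ileq A x y" "y \<in> A" shows "ileq x y"
  using way_below_in_imp_le[OF assms ileq_refl] .

lemma way_below_ginv: fixes x y :: 'a assumes "way_below_in ileq UNIV x y"
  shows "way_below_in ileq UNIV (ginv x) (ginv y)"
  using way_below_in_involution[OF ginv_ginv ileq_ginv_iff assms] .

section \<open>Way-below in S versus way-below in the idempotents\<close>

lemma is_sup_in_src: fixes D :: "'a set" and s :: 'a
  assumes sup: "is_sup_in ileq UNIV D s"
  shows "is_sup_in ileq idems (src ` D) (src s)"
  unfolding is_sup_in_def
proof (intro conjI ballI impI)
  have ub: "\<forall>d\<in>D. ileq d s" using sup unfolding is_sup_in_def by auto
  then show "ileq d' (src s)" if "d' \<in> src ` D" for d'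
    using that ileq_src by auto
  fix u :: 'a assume "u \<in> idems" and ub_u: "\<forall>d'\<in>src ` D. ileq d' u"
  then have u: "u * u = u" by simp
  have "ileq d (s * u)" if d: "d \<in> D" for d
  proof -
    have "src d = u * src d" using ub_u d ileq_idems_iff[OF src_idem u] by auto
    moreover have "d = s * src d" using ub d ileq_iff_src by blast
    ultimately have "d = (s * u) * src d" by (metis mult.assoc)
    then show ?thesis using ileqI_right src_idem by blast
  qed
  then have "ileq s (s * u)" using sup unfolding is_sup_in_def by auto
  then have "ileq (src s) (src s * u)" using ileq_src src_mult_idem[OF u] by metis
  then show "ileq (src s) u" using ileq_mult_idem_left[OF src_idem] ileq_trans by blast
qed (simp add: src_idem)

text \<open>Given D directed with supremum s \<ge> y, the set src ` D has supremum src s \<ge> src y, so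
  src x \<le> src d for some d \<in> D, and then x = s src x = d src x \<le> d.\<close>

lemma way_below_if_src_way_below: fixes x y :: 'a
  assumes xy: "ileq x y" and wb: "way_below_in ileq idems (src x) (src y)"
  shows "way_below_in ileq UNIV x y"
  unfolding way_below_in_def
proof (intro allI impI, elim conjE)
  fix D s assume D: "directed_in ileq UNIV D" and sup: "is_sup_in ileq UNIV D s"
    and "ileq y s"
  have "directed_in ileq idems (src ` D)"
    by (rule directed_in_image[OF D]) (auto simp: src_idem ileq_src)
  moreover have "ileq (src y) (src s)" using \<open>ileq y s\<close> ileq_src by blast
  ultimately obtain d where d: "d \<in> D" "ileq (src x) (src d)"
    using wb is_sup_in_src[OF sup] unfolding way_below_in_def by blast
  have "x = s * src x" using xy \<open>ileq y s\<close> ileq_trans ileq_iff_src by blast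
  moreover have "d = s * src d" using sup d(1) ileq_iff_src unfolding is_sup_in_def by blast
  moreover have "src x = src d * src x" using d(2) ileq_idems_iff src_idem by blast
  ultimately have "x = d * src x" by (metis mult.assoc)
  then show "\<exists>d\<in>D. ileq x d" using d(1) ileqI_right src_idem by blast
qed

lemma way_below_idems_imp_UNIV: fixes e f :: 'a
  assumes "e \<in> idems" "f \<in> idems" "way_below_in ileq idems e f"
  shows "way_below_in ileq UNIV e f"
  using way_below_if_src_way_below[OF way_below_imp_ileq[OF assms(3,2)]] assms
  by (simp add: ginv_idem)

lemma directed_in_mult_left: fixes E :: "'a set" and s :: 'a
  assumes "directed_in ileq idems E"
  shows "directed_in ileq UNIV ((*) s ` E)"
  using directed_in_image[OF assms] ileq_mult[OF ileq_refl] by blast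

context
  assumes mirror: "mirror_semigroup TYPE('a)"
begin

lemma is_sup_in_idems_imp_UNIV: fixes D :: "'a set" and x :: 'a
  assumes D: "directed_in ileq idems D" and sup: "is_sup_in ileq idems D x"
  shows "is_sup_in ileq UNIV D x"
proof -
  obtain y :: 'a where y: "is_sup_in ileq UNIV D y"
    using mirror D sup unfolding mirror_semigroup_def by blast
  have "ileq y x" using y sup unfolding is_sup_in_def by auto
  moreover from this have "y * y = y"
    using sup ileq_idem_imp_idem unfolding is_sup_in_def by auto
  then have "ileq x y" using y sup unfolding is_sup_in_def by auto
  ultimately show ?thesis using y ileq_antisym by metis
qed

lemma way_below_UNIV_imp_idems: fixes e f :: 'a
  assumes "way_below_in ileq UNIV e f"
  shows "way_below_in ileq idems e f"
  unfolding way_below_in_def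
proof (intro allI impI, elim conjE)
  fix D s assume D: "directed_in ileq idems D" and "is_sup_in ileq idems D s" "ileq f s"
  moreover have "directed_in ileq UNIV D" using D unfolding directed_in_def by auto
  ultimately show "\<exists>d\<in>D. ileq e d"
    using assms is_sup_in_idems_imp_UNIV unfolding way_below_in_def by blast
qed

text \<open>If u bounds s E from above then ginv s * u bounds E from above in S, which need not be
  an idempotent; the mirror property is what yields src s \<le> ginv s * u, whence s \<le> u.\<close>

lemma is_sup_in_mult_left: fixes E :: "'a set" and s :: 'a
  assumes E: "directed_in ileq idems E" and sup: "is_sup_in ileq idems E (src s)"
  shows "is_sup_in ileq UNIV ((*) s ` E) s"
  unfolding is_sup_in_def
proof (intro conjI ballI impI)
  have E_idem: "\<And>e. e \<in> E \<Longrightarrow> e * e = e" using E unfolding directed_in_def by auto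
  have E_below: "\<And>e. e \<in> E \<Longrightarrow> e = src s * e"
    using sup E_idem ileq_idems_iff src_idem unfolding is_sup_in_def by blast
  show "ileq d s" if "d \<in> (*) s ` E" for d
    using that E_idem ileq_mult_idem_right by auto
  fix u assume ub: "\<forall>d\<in>(*) s ` E. ileq d u"
  have "ileq e (ginv s * u)" if e: "e \<in> E" for e
  proof -
    have "src (s * e) = e" using src_mult_idem E_idem E_below e by metis
    then have "s * e = u * e" using ub e ileq_iff_src by force
    then have "ginv s * u * e = e" using E_below[OF e] by (simp add: mult.assoc)
    then show ?thesis using ileqI_right[OF E_idem[OF e]] by metis
  qed
  then have "ileq (src s) (ginv s * u)"
    using is_sup_in_idems_imp_UNIV[OF E sup] unfolding is_sup_in_def by auto
  then have "src s = ginv s * u * src s"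
    using ileq_iff_src ginv_idem src_idem by metis
  then have "s = tgt s * (u * src s)" using ginv_inverse_assoc by (metis mult.assoc)
  then have "ileq s (u * src s)" using ileqI_left tgt_idem by blast
  then show "ileq s u" using ileq_mult_idem_right[OF src_idem] ileq_trans by blast
qed simp

context
  assumes continuous: "continuous_in ileq (idems :: 'a set)"
begin

lemma way_below_src_approx: fixes s :: 'a
  shows "directed_in ileq idems {e \<in> idems. way_below_in ileq idems e (src s)}"
    and "is_sup_in ileq idems {e \<in> idems. way_below_in ileq idems e (src s)} (src s)"
  using continuous src_idem unfolding continuous_in_def by auto

text \<open>Approximate y from below by y e with e way below src y; the element y e reached
  by x witnesses src x \<le> e.\<close>

lemma src_way_below: fixes x y :: 'a
  assumes wb: "way_below_in ileq UNIV x y"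
  shows "way_below_in ileq idems (src x) (src y)"
proof -
  let ?E = "{e \<in> idems. way_below_in ileq idems e (src y)}"
  have "directed_in ileq UNIV ((*) y ` ?E)" "is_sup_in ileq UNIV ((*) y ` ?E) y"
    using directed_in_mult_left[OF way_below_src_approx(1)]
      is_sup_in_mult_left[OF way_below_src_approx] by blast+
  then obtain d where d: "d \<in> (*) y ` ?E" "ileq x d"
    using wb[unfolded way_below_in_def, rule_format, of "(*) y ` ?E" y] ileq_refl by blast
  then obtain e where e: "e * e = e" "way_below_in ileq idems e (src y)" "d = y * e" by auto
  have "ileq e (src y)" using way_below_imp_ileq[OF e(2)] src_idem by simp
  then have "src d = e"
    using e(3) src_mult_idem[OF e(1), of y] ileq_idems_iff[OF e(1) src_idem] by simp
  then show ?thesis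
    using ileq_src[OF d(2)] way_below_in_le_trans[OF transp_ileq _ e(2)] by simp
qed

lemma way_below_iff_src: fixes x y :: 'a
  shows "way_below_in ileq UNIV x y \<longleftrightarrow> ileq x y \<and> way_below_in ileq idems (src x) (src y)"
  using src_way_below way_below_imp_ileq way_below_if_src_way_below by blast

lemma way_below_iff_tgt: fixes x y :: 'a
  shows "way_below_in ileq UNIV x y \<longleftrightarrow> ileq x y \<and> way_below_in ileq idems (tgt x) (tgt y)"
proof -
  have "way_below_in ileq UNIV x y \<longleftrightarrow> way_below_in ileq UNIV (ginv x) (ginv y)"
    by (metis ginv_ginv way_below_ginv)
  also have "\<dots> \<longleftrightarrow> ileq x y \<and> way_below_in ileq idems (tgt x) (tgt y)"
    using way_below_iff_src[of "ginv x" "ginv y"] by simp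
  finally show ?thesis .
qed

lemma way_below_set_eq_image: fixes s :: 'a
  shows "{t \<in> UNIV. way_below_in ileq UNIV t s}
    = (*) s ` {e \<in> idems. way_below_in ileq idems e (src s)}"
proof (intro set_eqI iffI)
  fix t assume "t \<in> {t \<in> UNIV. way_below_in ileq UNIV t s}"
  then have "t = s * src t" and "way_below_in ileq idems (src t) (src s)"
    using way_below_iff_src ileq_iff_src by blast+
  then show "t \<in> (*) s ` {e \<in> idems. way_below_in ileq idems e (src s)}"
    using src_idem by auto
next
  fix t assume "t \<in> (*) s ` {e \<in> idems. way_below_in ileq idems e (src s)}"
  then obtain e where e: "e * e = e" "way_below_in ileq idems e (src s)" "t = s * e" by auto
  have "ileq e (src s)" using e way_below_imp_ileq src_idem by auto
  then have "src t = e" using e src_mult_idem ileq_idems_iff src_idem by auto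
  then show "t \<in> {t \<in> UNIV. way_below_in ileq UNIV t s}"
    using e way_below_iff_src ileq_mult_idem_right by auto
qed

lemma continuous_UNIV: "continuous_in ileq (UNIV :: 'a set)"
  unfolding continuous_in_def way_below_set_eq_image
  using directed_in_mult_left is_sup_in_mult_left way_below_src_approx by blast

text \<open>With x = src s * s' and y = src t * t' one has tgt x = src s * tgt s' and
  src x = src (s * s'); so way-below passes from the idempotents to x, y (via tgt)
  and back to the idempotents for s * s', t * t' (via src).\<close>

lemma way_below_mult:
  fixes s t s' t' :: 'a
  assumes mult_idems: "\<And>e f e' f' :: 'a. e \<in> idems \<Longrightarrow> f \<in> idems \<Longrightarrow> e' \<in> idems \<Longrightarrow>
      f' \<in> idems \<Longrightarrow> way_below_in ileq idems e f \<Longrightarrow> way_below_in ileq idems e' f' \<Longrightarrow>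
      way_below_in ileq idems (e * e') (f * f')"
    and wb: "way_below_in ileq UNIV s t" "way_below_in ileq UNIV s' t'"
  shows "way_below_in ileq UNIV (s * s') (t * t')"
proof -
  have le: "ileq s t" "ileq s' t'" using wb way_below_iff_src by blast+
  have "way_below_in ileq idems (src s) (src t)" "way_below_in ileq idems (tgt s') (tgt t')"
    using wb way_below_iff_src way_below_iff_tgt by blast+
  then have "way_below_in ileq idems (src s * tgt s') (src t * tgt t')"
    by (rule mult_idems[rotated 4]) (simp_all add: src_idem tgt_idem)
  then have "way_below_in ileq idems (tgt (src s * s')) (tgt (src t * t'))"
    by (simp add: tgt_idem_mult src_idem)
  then have "way_below_in ileq UNIV (src s * s') (src t * t')"
    using way_below_iff_tgt ileq_mult[OF ileq_src[OF le(1)] le(2)] by blast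
  then have "way_below_in ileq idems (src (s * s')) (src (t * t'))"
    using way_below_iff_src src_src_mult by metis
  then show ?thesis using way_below_iff_src ileq_mult[OF le] by blast
qed

end

lemma stably_continuous_idems_if_UNIV:
  assumes "stably_continuous_in (UNIV :: 'a set)"
  shows "stably_continuous_in (idems :: 'a set)"
proof -
  have cont: "continuous_in ileq (UNIV :: 'a set)" using assms stably_continuous_in_def by blast
  have approx_eq:
    "{t \<in> idems. way_below_in ileq idems t e} = {t \<in> UNIV. way_below_in ileq UNIV t e}"
    if e: "e \<in> idems" for e :: 'a
  proof (intro set_eqI iffI)
    fix t assume "t \<in> {t \<in> UNIV. way_below_in ileq UNIV t e}"
    then have wb: "way_below_in ileq UNIV t e" by simp
    then have "t \<in> idems"
      using e way_below_imp_ileq[OF wb UNIV_I] ileq_idem_imp_idem by simp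
    with wb show "t \<in> {t \<in> idems. way_below_in ileq idems t e}"
      using way_below_UNIV_imp_idems by blast
  qed (use e way_below_idems_imp_UNIV in blast)
  have "continuous_in ileq (idems :: 'a set)"
    unfolding continuous_in_def
  proof
    fix e :: 'a assume e: "e \<in> idems"
    have "{t \<in> UNIV. way_below_in ileq UNIV t e} \<subseteq> idems" using approx_eq[OF e] by blast
    then show "directed_in ileq idems {t \<in> idems. way_below_in ileq idems t e} \<and>
        is_sup_in ileq idems {t \<in> idems. way_below_in ileq idems t e} e"
      unfolding approx_eq[OF e]
      using cont e by (auto simp del: mem_idems_iff simp: continuous_in_def directed_in_def is_sup_in_def)
  qed
  moreover have "way_below_in ileq idems (s * s') (t * t')"
    if "s \<in> idems" "t \<in> idems" "s' \<in> idems" "t' \<in> idems"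
      "way_below_in ileq idems s t" "way_below_in ileq idems s' t'" for s t s' t' :: 'a
    using that assms way_below_idems_imp_UNIV way_below_UNIV_imp_idems
    unfolding stably_continuous_in_def by blast
  ultimately show ?thesis unfolding stably_continuous_in_def by blast
qed

lemma stably_continuous_UNIV_if_idems:
  assumes "stably_continuous_in (idems :: 'a set)"
  shows "stably_continuous_in (UNIV :: 'a set)"
  using assms continuous_UNIV way_below_mult unfolding stably_continuous_in_def by blast

end

end

theorem corollary5p4:
  assumes "inverse_semigroup TYPE('a::semigroup_mult)"
    and "mirror_semigroup TYPE('a)"
  shows "stably_continuous_in (UNIV :: 'a set) \<longleftrightarrow> stably_continuous_in (idems :: 'a set)"
  using stably_continuous_idems_if_UNIV[OF assms] stably_continuous_UNIV_if_idems[OF assms]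
  by blast

end
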